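(* Let $E=(e_1,\dots,e_{4n-1})$ be a positively oriented $J$-basis. The stem-quadrant $SQ(E)=\{\vec u\in\mathbb{R}^{4n-1}:\vec u+\mathcal{H}_E\subset\mathcal{H}_E\}$ equals the closed convex cone $\{-\alpha e_1+\beta e_{4n-1}:\alpha,\beta\ge0\}$ generated by $-e_1$ and $e_{4n-1}$.
   Context: $\mathbb{R}^{2n,2n-1}$ is $\mathbb{R}^{4n-1}$ with form $v^TJw$, $J$ antidiagonal with $J_{i,4n-i}=(-1)^i$; a $J$-basis is one in which the Gram matrix is $J$. For a nonzero vector $v$, $S^+_E(v)$ (resp. $S^-_E(v)$) is the number of sign changes of its coordinate sequence in $E$ when signs are assigned to zero coordinates so as to maximize (resp. minimize) this number. $\mathcal{H}_E=\{v: S^+_E(v)\le 2n-1$, and in case of equality the sign of the last coordinate used in computing $S^+_E$ is positive$\}$ (the open crooked halfspace); $\overline{\mathcal{H}}_E=\{v: S^-_E(v)\le 2n-1$, and in case of equality the last nonzero coordinate is positive$\}$ is its closure. *)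

theory Defs
  imports "HOL-Analysis.Analysis"
begin

text \<open>Vectors of R^{2n,2n-1} = R^{4n-1} are functions nat => real supported on {1..4n-1}.\<close>

definition dimN :: "nat \<Rightarrow> nat" where
  "dimN n = 4 * n - 1"

definition Rvec :: "nat \<Rightarrow> (nat \<Rightarrow> real) set" where
  "Rvec n = {v. \<forall>i. (i < 1 \<or> i > dimN n) \<longrightarrow> v i = 0}"

text \<open>The form v^T J w with J antidiagonal, J(i, 4n-i) = (-1)^i.\<close>
definition Jform :: "nat \<Rightarrow> (nat \<Rightarrow> real) \<Rightarrow> (nat \<Rightarrow> real) \<Rightarrow> real" where
  "Jform n v w = (\<Sum>i=1..dimN n. (-1) ^ i * v i * w (4 * n - i))"

definition Jmat :: "nat \<Rightarrow> nat \<Rightarrow> nat \<Rightarrow> real" where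
  "Jmat n i j = (if j = 4 * n - i then (-1) ^ i else 0)"

definition is_J_basis :: "nat \<Rightarrow> (nat \<Rightarrow> nat \<Rightarrow> real) \<Rightarrow> bool" where
  "is_J_basis n E \<longleftrightarrow> (\<forall>i\<in>{1..dimN n}. E i \<in> Rvec n) \<and>
     (\<forall>i\<in>{1..dimN n}. \<forall>j\<in>{1..dimN n}. Jform n (E i) (E j) = Jmat n i j)"

definition basis_det :: "nat \<Rightarrow> (nat \<Rightarrow> nat \<Rightarrow> real) \<Rightarrow> real" where
  "basis_det n E = (\<Sum>p\<in>{p. p permutes {1..dimN n}}.
      of_int (sign p) * (\<Prod>j\<in>{1..dimN n}. E j (p j)))"

definition pos_oriented :: "nat \<Rightarrow> (nat \<Rightarrow> nat \<Rightarrow> real) \<Rightarrow> bool" where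
  "pos_oriented n E \<longleftrightarrow> basis_det n E > 0"

definition coords :: "nat \<Rightarrow> (nat \<Rightarrow> nat \<Rightarrow> real) \<Rightarrow> (nat \<Rightarrow> real) \<Rightarrow> (nat \<Rightarrow> real)" where
  "coords n E v = (THE c. (\<forall>i. (i < 1 \<or> i > dimN n) \<longrightarrow> c i = 0) \<and>
                          v = (\<lambda>k. \<Sum>i=1..dimN n. c i * E i k))"

definition compat_signs :: "nat \<Rightarrow> (nat \<Rightarrow> real) \<Rightarrow> (nat \<Rightarrow> real) set" where
  "compat_signs n c = {s. (\<forall>i\<in>{1..dimN n}. s i \<in> {1, -1} \<and> (c i \<noteq> 0 \<longrightarrow> s i = sgn (c i)))}"

definition sign_changes :: "nat \<Rightarrow> (nat \<Rightarrow> real) \<Rightarrow> nat" where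
  "sign_changes n s = card {i\<in>{1..<dimN n}. s i \<noteq> s (i + 1)}"

definition Splus :: "nat \<Rightarrow> (nat \<Rightarrow> real) \<Rightarrow> nat" where
  "Splus n c = Max (sign_changes n ` compat_signs n c)"

definition Sminus :: "nat \<Rightarrow> (nat \<Rightarrow> real) \<Rightarrow> nat" where
  "Sminus n c = Min (sign_changes n ` compat_signs n c)"

definition crooked_H :: "nat \<Rightarrow> (nat \<Rightarrow> nat \<Rightarrow> real) \<Rightarrow> (nat \<Rightarrow> real) set" where
  "crooked_H n E = {v \<in> Rvec n. v \<noteq> (\<lambda>_. 0) \<and>
     (let c = coords n E v in
       Splus n c < 2 * n - 1 \<or>
       (Splus n c = 2 * n - 1 \<and>
         (\<exists>s\<in>compat_signs n c. sign_changes n s = Splus n c \<and> s (dimN n) = 1)))}"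

definition stem_quadrant :: "nat \<Rightarrow> (nat \<Rightarrow> nat \<Rightarrow> real) \<Rightarrow> (nat \<Rightarrow> real) set" where
  "stem_quadrant n E = {u \<in> Rvec n. \<forall>v\<in>crooked_H n E. (\<lambda>k. u k + v k) \<in> crooked_H n E}"

end

theory Submission
  imports Defs "HOL-Library.Function_Algebras"
begin

text \<open>Work in \<open>E\<close>-coordinates and pad every compatible sign sequence with \<open>-1\<close> in front
  and \<open>+1\<close> behind. A vector lies in \<open>\<H>\<^sub>E\<close> exactly when it is nonzero and every padded sign
  sequence has at most \<open>2n - 1\<close> sign changes: the equality case of \<open>S\<^sup>+\<close> with a positive last
  sign is precisely the case where the padding adds no change.
  Adding \<open>-\<alpha> e\<^sub>1 + \<beta> e\<^sub>4\<^sub>n\<^sub>-\<^sub>1\<close> only moves the first coordinate towards \<open>-\<close> and the last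
  towards \<open>+\<close>, i.e. towards the padding, so no padded count grows and the cone lies in the stem
  quadrant. Conversely, if \<open>u\<close> has a coordinate \<open>u\<^sub>k\<close> violating this sign pattern, take
  \<open>v \<in> \<H>\<^sub>E\<close> with nonvanishing coordinates, exactly \<open>2n - 1\<close> padded sign changes, constant
  signs around position \<open>k\<close> opposite to that of \<open>u\<^sub>k\<close> and \<open>|v\<^sub>k| < |u\<^sub>k|\<close>: then \<open>u + v\<close> flips
  exactly the sign at \<open>k\<close>, gaining two sign changes, so \<open>u + v \<notin> \<H>\<^sub>E\<close>.\<close>

definition sign_changes_on :: "(nat \<Rightarrow> real) \<Rightarrow> nat \<Rightarrow> nat \<Rightarrow> nat" where
  "sign_changes_on e a b = card {i\<in>{a..<b}. e i \<noteq> e (Suc i)}"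

lemma sign_changes_on_split:
  assumes "a \<le> b" "b \<le> c"
  shows "sign_changes_on e a c = sign_changes_on e a b + sign_changes_on e b c"
proof -
  have "{i\<in>{a..<c}. e i \<noteq> e (Suc i)} =
        {i\<in>{a..<b}. e i \<noteq> e (Suc i)} \<union> {i\<in>{b..<c}. e i \<noteq> e (Suc i)}"
    using assms by auto
  then show ?thesis
    unfolding sign_changes_on_def by (simp add: card_Un_disjoint ivl_disj_int_two(3) disjoint_iff)
qed

lemma sign_changes_on_Suc: "sign_changes_on e a (Suc a) = of_bool (e a \<noteq> e (Suc a))"
proof -
  have "{i\<in>{a..<Suc a}. e i \<noteq> e (Suc i)} = (if e a \<noteq> e (Suc a) then {a} else {})" by auto
  then show ?thesis unfolding sign_changes_on_def by simp
qed

lemma sign_changes_on_cong: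
  assumes "\<And>i. a \<le> i \<Longrightarrow> i \<le> b \<Longrightarrow> e i = e' i"
  shows "sign_changes_on e a b = sign_changes_on e' a b"
proof -
  have "{i\<in>{a..<b}. e i \<noteq> e (Suc i)} = {i\<in>{a..<b}. e' i \<noteq> e' (Suc i)}"
    using assms by auto
  then show ?thesis unfolding sign_changes_on_def by simp
qed

lemma sign_changes_on_le: "sign_changes_on e a b \<le> b - a"
proof -
  have "card {i\<in>{a..<b}. e i \<noteq> e (Suc i)} \<le> card {a..<b}" by (rule card_mono) auto
  then show ?thesis unfolding sign_changes_on_def by simp
qed

lemma even_sign_changes_on_iff:
  assumes "a \<le> b" "\<And>i. a \<le> i \<Longrightarrow> i \<le> b \<Longrightarrow> e i \<in> {1, -1}"
  shows "even (sign_changes_on e a b) \<longleftrightarrow> e a = e b"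
  using assms
proof (induction b)
  case 0
  then show ?case by (simp add: sign_changes_on_def)
next
  case (Suc b)
  show ?case
  proof (cases "a = Suc b")
    case False
    then have ab: "a \<le> b" using Suc by simp
    have IH: "even (sign_changes_on e a b) \<longleftrightarrow> e a = e b"
      using Suc.IH[OF ab] Suc.prems(2) by simp
    have "e a \<in> {1,-1}" "e b \<in> {1,-1}" "e (Suc b) \<in> {1,-1}"
      using Suc.prems(2) ab by auto
    then show ?thesis
      using IH sign_changes_on_split[OF ab, of "Suc b" e] sign_changes_on_Suc[of e b] by auto
  qed (simp add: sign_changes_on_def)
qed

lemma sign_changes_on_flip:
  assumes "a < j" "j < b" "e (j - 1) \<in> {1, -1}" "e j \<in> {1, -1}" "e (Suc j) \<in> {1, -1}"
  shows "sign_changes_on (e(j := - e j)) a b + 2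
       = sign_changes_on e a b + 2 * (of_bool (e (j - 1) = e j) + of_bool (e j = e (Suc j)))"
proof -
  have j: "Suc (j - 1) = j" using assms(1) by simp
  have split: "sign_changes_on f a b
      = sign_changes_on f a (j - 1) + of_bool (f (j - 1) \<noteq> f j) + of_bool (f j \<noteq> f (Suc j))
        + sign_changes_on f (Suc j) b" for f
  proof -
    have "sign_changes_on f a b = sign_changes_on f a (j - 1) + sign_changes_on f (j - 1) b"
      using assms(1,2) by (intro sign_changes_on_split) auto
    also have "sign_changes_on f (j - 1) b = sign_changes_on f (j - 1) j + sign_changes_on f j b"
      using assms(2) by (intro sign_changes_on_split) auto
    also have "sign_changes_on f j b = sign_changes_on f j (Suc j) + sign_changes_on f (Suc j) b"
      using assms(2) by (intro sign_changes_on_split) auto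
    finally show ?thesis
      using sign_changes_on_Suc[of f "j - 1", unfolded j] sign_changes_on_Suc[of f j] by simp
  qed
  have "sign_changes_on (e(j := - e j)) a (j - 1) = sign_changes_on e a (j - 1)"
       "sign_changes_on (e(j := - e j)) (Suc j) b = sign_changes_on e (Suc j) b"
    by (rule sign_changes_on_cong; use assms(1) in simp)+
  moreover have "(e (j - 1) \<noteq> - e j) \<longleftrightarrow> e (j - 1) = e j" "(- e j \<noteq> e (Suc j)) \<longleftrightarrow> e j = e (Suc j)"
    using assms(3-5) by auto
  ultimately show ?thesis
    using split[of e] split[of "e(j := - e j)"] assms by (auto simp: of_bool_def)
qed

definition is_sign_seq :: "nat \<Rightarrow> (nat \<Rightarrow> real) \<Rightarrow> bool" where
  "is_sign_seq n s \<longleftrightarrow> (\<forall>i\<in>{1..dimN n}. s i \<in> {1, -1})"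

definition padded :: "nat \<Rightarrow> (nat \<Rightarrow> real) \<Rightarrow> nat \<Rightarrow> real" where
  "padded n s i = (if i = 0 then -1 else if i = Suc (dimN n) then 1 else s i)"

definition padded_sign_changes :: "nat \<Rightarrow> (nat \<Rightarrow> real) \<Rightarrow> nat" where
  "padded_sign_changes n s = sign_changes_on (padded n s) 0 (Suc (dimN n))"

lemma dimN_ge_3: "n \<ge> 1 \<Longrightarrow> dimN n \<ge> 3"
  unfolding dimN_def by simp

lemma sign_changes_eq_sign_changes_on: "sign_changes n s = sign_changes_on s 1 (dimN n)"
  unfolding sign_changes_def sign_changes_on_def by simp

lemma is_sign_seqD: "is_sign_seq n s \<Longrightarrow> 1 \<le> i \<Longrightarrow> i \<le> dimN n \<Longrightarrow> s i \<in> {1, -1}"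
  unfolding is_sign_seq_def by auto

lemma is_sign_seq_upd: "is_sign_seq n s \<Longrightarrow> x \<in> {1, -1} \<Longrightarrow> is_sign_seq n (s(j := x))"
  unfolding is_sign_seq_def by auto

lemma padded_sign: "is_sign_seq n s \<Longrightarrow> i \<le> Suc (dimN n) \<Longrightarrow> padded n s i \<in> {1, -1}"
  using is_sign_seqD[of n s i] unfolding padded_def by auto

lemma padded_upd: "1 \<le> j \<Longrightarrow> j \<le> dimN n \<Longrightarrow> padded n (s(j := x)) = (padded n s)(j := x)"
  unfolding padded_def by auto

lemma padded_sign_changes_eq:
  assumes "n \<ge> 1" "is_sign_seq n s"
  shows "padded_sign_changes n s = sign_changes n s + of_bool (s 1 = 1) + of_bool (s (dimN n) = -1)"
proof -
  let ?N = "dimN n" and ?p = "padded n s"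
  have N: "?N \<ge> 3" using dimN_ge_3 assms(1) .
  have "padded_sign_changes n s = sign_changes_on ?p 0 1 + sign_changes_on ?p 1 ?N + sign_changes_on ?p ?N (Suc ?N)"
    unfolding padded_sign_changes_def
    using sign_changes_on_split[of 0 1 "Suc ?N" ?p] sign_changes_on_split[of 1 ?N "Suc ?N" ?p] N by simp
  moreover have "sign_changes_on ?p 1 ?N = sign_changes n s"
    unfolding sign_changes_eq_sign_changes_on by (rule sign_changes_on_cong) (auto simp: padded_def)
  moreover have "s 1 \<in> {1, -1}" "s ?N \<in> {1, -1}"
    using is_sign_seqD[OF assms(2)] N by auto
  ultimately show ?thesis
    using N by (auto simp: sign_changes_on_Suc padded_def)
qed

text \<open>Moving the first sign to \<open>+\<close> (or the last to \<open>-\<close>) creates a change against the padding,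
  which makes up for the at most one change it removes inside.\<close>

lemma padded_sign_changes_le_set_first:
  assumes "n \<ge> 1" "is_sign_seq n s"
  shows "padded_sign_changes n s \<le> padded_sign_changes n (s(1 := 1))"
proof (cases "s 1 = 1")
  case False
  have N: "dimN n \<ge> 3" using dimN_ge_3 assms(1) .
  then have "s 1 = -1" using False is_sign_seqD[OF assms(2), of 1] by auto
  then have "padded n (s(1 := 1)) = (padded n s)(1 := - padded n s 1)"
    using padded_upd[of 1 n s 1] N by (simp add: padded_def)
  moreover have "padded n s 0 = padded n s 1"
    using \<open>s 1 = -1\<close> N by (simp add: padded_def)
  ultimately show ?thesis
    unfolding padded_sign_changes_def
    using sign_changes_on_flip[of 0 1 "Suc (dimN n)" "padded n s"] padded_sign[OF assms(2)] N by simp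
qed (simp add: fun_upd_idem)

lemma padded_sign_changes_le_set_last:
  assumes "n \<ge> 1" "is_sign_seq n s"
  shows "padded_sign_changes n s \<le> padded_sign_changes n (s(dimN n := -1))"
proof (cases "s (dimN n) = -1")
  case False
  have N: "dimN n \<ge> 3" using dimN_ge_3 assms(1) .
  then have "s (dimN n) = 1" using False is_sign_seqD[OF assms(2), of "dimN n"] by auto
  then have "padded n (s(dimN n := -1)) = (padded n s)(dimN n := - padded n s (dimN n))"
    using padded_upd[of "dimN n" n s "-1"] N by (simp add: padded_def)
  moreover have "padded n s (dimN n) = padded n s (Suc (dimN n))"
    using \<open>s (dimN n) = 1\<close> N by (simp add: padded_def)
  ultimately show ?thesis
    unfolding padded_sign_changes_def
    using sign_changes_on_flip[of 0 "dimN n" "Suc (dimN n)" "padded n s"] padded_sign[OF assms(2)] N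
    by simp
qed (simp add: fun_upd_idem)

lemma compat_signs_is_sign_seq: "s \<in> compat_signs n c \<Longrightarrow> is_sign_seq n s"
  unfolding compat_signs_def is_sign_seq_def by auto

lemma compat_signsD: "s \<in> compat_signs n c \<Longrightarrow> 1 \<le> i \<Longrightarrow> i \<le> dimN n \<Longrightarrow> c i \<noteq> 0 \<Longrightarrow> s i = sgn (c i)"
  unfolding compat_signs_def by auto

lemma compat_signs_nonempty: "(\<lambda>i. if c i < 0 then -1 else 1) \<in> compat_signs n c"
  unfolding compat_signs_def by (auto simp: sgn_if)

lemma finite_sign_changes_image: "finite (sign_changes n ` compat_signs n c)"
proof (rule finite_subset)
  have "sign_changes n s \<le> dimN n" for s
    using sign_changes_on_le[of s 1 "dimN n"] by (simp add: sign_changes_eq_sign_changes_on)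
  then show "sign_changes n ` compat_signs n c \<subseteq> {..dimN n}" by auto
qed simp

lemma sign_changes_le_Splus: "s \<in> compat_signs n c \<Longrightarrow> sign_changes n s \<le> Splus n c"
  unfolding Splus_def using finite_sign_changes_image by simp

lemma Splus_attained: "\<exists>s\<in>compat_signs n c. sign_changes n s = Splus n c"
  unfolding Splus_def
  using Max_in[OF finite_sign_changes_image] compat_signs_nonempty by force

text \<open>Behind the last nonzero coordinate all signs are free, so a maximiser alternates there.\<close>

lemma Splus_maximiser_alternates:
  assumes s: "s \<in> compat_signs n c" "sign_changes n s = Splus n c"
    and i: "1 \<le> i" "i < dimN n" and zero: "\<And>j. i < j \<Longrightarrow> j \<le> dimN n \<Longrightarrow> c j = 0"
  shows "s (Suc i) = - s i"
proof (rule ccontr)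
  assume neq: "s (Suc i) \<noteq> - s i"
  have pm: "s i \<in> {1, -1}" "s (Suc i) \<in> {1, -1}"
    using is_sign_seqD[OF compat_signs_is_sign_seq[OF s(1)]] i by auto
  then have eq: "s i = s (Suc i)" using neq by auto
  define t where "t = (\<lambda>j. if i < j then - s j else s j)"
  have "t \<in> compat_signs n c"
    using s(1) zero unfolding compat_signs_def t_def by force
  moreover have "{j\<in>{1..<dimN n}. t j \<noteq> t (j + 1)} = insert i {j\<in>{1..<dimN n}. s j \<noteq> s (j + 1)}"
  proof (rule set_eqI)
    fix j show "j \<in> {j\<in>{1..<dimN n}. t j \<noteq> t (j + 1)} \<longleftrightarrow> j \<in> insert i {j\<in>{1..<dimN n}. s j \<noteq> s (j + 1)}"
      using i eq pm by (cases "j < i"; cases "j = i") (auto simp: t_def)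
  qed
  then have "sign_changes n t = sign_changes n s + 1"
    unfolding sign_changes_def using eq by simp
  ultimately show False
    using sign_changes_le_Splus s(2) by fastforce
qed

lemma Splus_maximisers_agree_last:
  assumes "\<exists>i\<in>{1..dimN n}. c i \<noteq> 0"
    and s: "s \<in> compat_signs n c" "sign_changes n s = Splus n c"
    and s': "s' \<in> compat_signs n c" "sign_changes n s' = Splus n c"
  shows "s (dimN n) = s' (dimN n)"
proof -
  define Q where "Q = {i\<in>{1..dimN n}. c i \<noteq> 0}"
  define q where "q = Max Q"
  have Q: "finite Q" "Q \<noteq> {}" unfolding Q_def using assms(1) by auto
  have q: "1 \<le> q" "q \<le> dimN n" "c q \<noteq> 0"
    using Max_in[OF Q] unfolding q_def Q_def by auto
  have zero: "c j = 0" if "q < j" "j \<le> dimN n" for j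
  proof (rule ccontr)
    assume "c j \<noteq> 0"
    then have "j \<in> Q" using that q(1) unfolding Q_def by auto
    then show False using Max_ge[OF Q(1)] that(1) unfolding q_def by fastforce
  qed
  have tail: "s (q + d) = sgn (c q) * (-1) ^ d"
    if "s \<in> compat_signs n c" "sign_changes n s = Splus n c" "q + d \<le> dimN n" for s d
    using that(3)
  proof (induction d)
    case 0
    then show ?case using compat_signsD[OF that(1) q] by simp
  next
    case (Suc d)
    then show ?case
      using Splus_maximiser_alternates[OF that(1,2), of "q + d"] q zero by simp
  qed
  show ?thesis
    using tail[OF s, of "dimN n - q"] tail[OF s', of "dimN n - q"] q by simp
qed

definition crooked_coords :: "nat \<Rightarrow> (nat \<Rightarrow> real) \<Rightarrow> bool" where
  "crooked_coords n c \<longleftrightarrow> Splus n c < 2 * n - 1 \<or>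
     (Splus n c = 2 * n - 1 \<and>
       (\<exists>s\<in>compat_signs n c. sign_changes n s = Splus n c \<and> s (dimN n) = 1))"

definition padded_bounded :: "nat \<Rightarrow> (nat \<Rightarrow> real) \<Rightarrow> bool" where
  "padded_bounded n c \<longleftrightarrow> (\<forall>s\<in>compat_signs n c. padded_sign_changes n s \<le> 2 * n - 1)"

lemma even_sign_changes_iff:
  assumes "n \<ge> 1" "is_sign_seq n s"
  shows "even (sign_changes n s) \<longleftrightarrow> s 1 = s (dimN n)"
  unfolding sign_changes_eq_sign_changes_on
  using dimN_ge_3[OF assms(1)] is_sign_seqD[OF assms(2)] by (intro even_sign_changes_on_iff) auto

lemma padded_bounded_imp_crooked_coords:
  assumes "n \<ge> 1" "padded_bounded n c"
  shows "crooked_coords n c"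
proof -
  obtain s where s: "s \<in> compat_signs n c" "sign_changes n s = Splus n c"
    using Splus_attained by blast
  have "s (dimN n) \<in> {1, -1}"
    using is_sign_seqD[OF compat_signs_is_sign_seq[OF s(1)]] dimN_ge_3[OF assms(1)] by auto
  moreover have "padded_sign_changes n s \<le> 2 * n - 1"
    using assms(2) s(1) unfolding padded_bounded_def by blast
  ultimately show ?thesis
    unfolding crooked_coords_def
    using padded_sign_changes_eq[OF assms(1) compat_signs_is_sign_seq[OF s(1)]] s by auto
qed

lemma crooked_coords_imp_padded_bounded:
  assumes n: "n \<ge> 1" and nz: "\<exists>i\<in>{1..dimN n}. c i \<noteq> 0" and crooked: "crooked_coords n c"
  shows "padded_bounded n c"
  unfolding padded_bounded_def
proof
  fix s assume s: "s \<in> compat_signs n c"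
  have seq: "is_sign_seq n s" using compat_signs_is_sign_seq[OF s] .
  have pm: "s 1 \<in> {1, -1}" "s (dimN n) \<in> {1, -1}"
    using is_sign_seqD[OF seq] dimN_ge_3[OF n] by auto
  have Splus_le: "Splus n c \<le> 2 * n - 1"
    using crooked unfolding crooked_coords_def by auto
  have le: "sign_changes n s \<le> 2 * n - 1"
    using sign_changes_le_Splus[OF s] Splus_le by simp
  have odd: "odd (2 * n - 1)" using n by simp
  have parity: "even (sign_changes n s) \<longleftrightarrow> s 1 = s (dimN n)"
    using even_sign_changes_iff[OF n seq] .
  consider "sign_changes n s + 2 \<le> 2 * n - 1" | "sign_changes n s + 1 = 2 * n - 1"
    | "sign_changes n s = 2 * n - 1"
    using le by linarith
  then show "padded_sign_changes n s \<le> 2 * n - 1"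
  proof cases
    case 2
    then have "s 1 = s (dimN n)" using parity odd by (metis add_diff_cancel_right' odd_add odd_one)
    then show ?thesis using padded_sign_changes_eq[OF n seq] pm 2 by auto
  next
    case 3
    text \<open>Then \<open>s\<close> is a maximiser, and all maximisers end with the same sign, which is \<open>+\<close>.\<close>
    then have max: "sign_changes n s = Splus n c"
      using sign_changes_le_Splus[OF s] Splus_le by simp
    then obtain s0 where s0: "s0 \<in> compat_signs n c" "sign_changes n s0 = Splus n c" "s0 (dimN n) = 1"
      using crooked 3 unfolding crooked_coords_def by auto
    then have last: "s (dimN n) = 1"
      using Splus_maximisers_agree_last[OF nz s max s0(1,2)] by simp
    moreover have "s 1 = -1" using parity 3 odd last pm by auto
    ultimately show ?thesis using padded_sign_changes_eq[OF n seq] 3 by simp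
  qed (use padded_sign_changes_eq[OF n seq] in auto)
qed

definition stem_coords :: "nat \<Rightarrow> real \<Rightarrow> real \<Rightarrow> nat \<Rightarrow> real" where
  "stem_coords n \<alpha> \<beta> i = (if i = 1 then - \<alpha> else if i = dimN n then \<beta> else 0)"

lemma padded_bounded_add_stem:
  assumes n: "n \<ge> 1" and "\<alpha> \<ge> 0" "\<beta> \<ge> 0" and bounded: "padded_bounded n c"
  shows "padded_bounded n (\<lambda>i. c i + stem_coords n \<alpha> \<beta> i)"
  unfolding padded_bounded_def
proof
  let ?N = "dimN n" and ?w = "\<lambda>i. c i + stem_coords n \<alpha> \<beta> i"
  have N: "?N \<ge> 3" using dimN_ge_3[OF n] .
  fix s assume s: "s \<in> compat_signs n ?w"
  have seq: "is_sign_seq n s" using compat_signs_is_sign_seq[OF s] .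
  define s1 where "s1 = (if c 1 > 0 then s(1 := 1) else s)"
  define s2 where "s2 = (if c ?N < 0 then s1(?N := -1) else s1)"
  have seq1: "is_sign_seq n s1" using seq unfolding s1_def by (simp add: is_sign_seq_upd)
  have "padded_sign_changes n s \<le> padded_sign_changes n s1"
    unfolding s1_def using padded_sign_changes_le_set_first[OF n seq] by simp
  also have "\<dots> \<le> padded_sign_changes n s2"
    unfolding s2_def using padded_sign_changes_le_set_last[OF n seq1] by simp
  also have "s2 \<in> compat_signs n c"
    unfolding compat_signs_def
  proof (intro CollectI ballI conjI impI)
    fix i assume i: "i \<in> {1..?N}"
    show "s2 i \<in> {1, -1}"
      using is_sign_seqD[OF seq1] i unfolding s2_def by auto
    assume "c i \<noteq> 0"
    then consider "i = 1" "c 1 > 0" | "i = 1" "c 1 < 0" | "i = ?N" "c ?N < 0" | "i = ?N" "c ?N > 0"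
      | "i \<noteq> 1" "i \<noteq> ?N" by fastforce
    then show "s2 i = sgn (c i)"
    proof cases
      case 2
      then have "?w 1 < 0" using assms(2) by (simp add: stem_coords_def)
      then show ?thesis using 2 N compat_signsD[OF s, of 1] by (simp add: s1_def s2_def)
    next
      case 4
      then have "?w ?N > 0" using assms(3) N by (simp add: stem_coords_def)
      then show ?thesis using 4 N compat_signsD[OF s, of ?N] by (simp add: s1_def s2_def)
    next
      case 5
      then show ?thesis
        using compat_signsD[OF s, of i] i \<open>c i \<noteq> 0\<close> by (simp add: s1_def s2_def stem_coords_def)
    qed (use N in \<open>auto simp: s1_def s2_def\<close>)
  qed
  then have "padded_sign_changes n s2 \<le> 2 * n - 1"
    using bounded unfolding padded_bounded_def by blast
  finally show "padded_sign_changes n s \<le> 2 * n - 1" .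
qed

lemma not_padded_bounded_neg_stem:
  assumes n: "n \<ge> 1" and "\<alpha> \<ge> 0" "\<beta> \<ge> 0"
    and c: "\<And>i. 1 \<le> i \<Longrightarrow> i \<le> dimN n \<Longrightarrow> c i = - stem_coords n \<alpha> \<beta> i"
  shows "\<not> padded_bounded n c"
proof
  let ?N = "dimN n"
  have N: "?N \<ge> 3" using dimN_ge_3[OF n] .
  define s where "s = (\<lambda>i. if i = ?N then -1 else (-1::real) ^ (i + 1))"
  have pm: "s i \<in> {1, -1}" for i
    unfolding s_def by (auto simp: minus_one_power_iff)
  have "s \<in> compat_signs n c"
    unfolding compat_signs_def
  proof (intro CollectI ballI conjI impI)
    fix i assume i: "i \<in> {1..?N}" and "c i \<noteq> 0"
    then have "i = 1 \<and> c i = \<alpha> \<and> \<alpha> > 0 \<or> i = ?N \<and> c i = - \<beta> \<and> \<beta> > 0"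
      using c[of i] assms(2,3) by (auto simp: stem_coords_def split: if_splits)
    then show "s i = sgn (c i)" using N by (auto simp: s_def)
  qed (use pm in simp)
  moreover assume "padded_bounded n c"
  ultimately have "padded_sign_changes n s \<le> 2 * n - 1"
    unfolding padded_bounded_def by blast
  moreover have "{1..<?N - 1} \<subseteq> {i\<in>{1..<?N}. s i \<noteq> s (i + 1)}"
    unfolding s_def by auto
  then have "card {1..<?N - 1} \<le> sign_changes n s"
    unfolding sign_changes_def by (rule card_mono[rotated]) simp
  moreover have "is_sign_seq n s"
    unfolding is_sign_seq_def using pm by simp
  then have "padded_sign_changes n s = sign_changes n s + 2"
    using padded_sign_changes_eq[OF n] N by (simp add: s_def)
  ultimately show False
    using N n unfolding dimN_def by simp
qed

lemma padded_bounded_iff_sign_pattern: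
  assumes sgn_c: "\<And>i. 1 \<le> i \<Longrightarrow> i \<le> dimN n \<Longrightarrow> sgn (c i) = u i"
    and "\<And>i. u i \<noteq> 0" "u 0 = -1" "u (Suc (dimN n)) = 1"
  shows "padded_bounded n c \<longleftrightarrow> sign_changes_on u 0 (Suc (dimN n)) \<le> 2 * n - 1"
proof -
  have nz: "c i \<noteq> 0" if "1 \<le> i" "i \<le> dimN n" for i
    using sgn_c[OF that] assms(2)[of i] by auto
  then have "(\<lambda>i. sgn (c i)) \<in> compat_signs n c"
    unfolding compat_signs_def by (auto simp: sgn_if)
  moreover have "padded_sign_changes n s = sign_changes_on u 0 (Suc (dimN n))"
    if s: "s \<in> compat_signs n c" for s
    unfolding padded_sign_changes_def
  proof (rule sign_changes_on_cong)
    fix i assume "0 \<le> i" "i \<le> Suc (dimN n)"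
    then show "padded n s i = u i"
      using compat_signsD[OF s, of i] nz[of i] sgn_c[of i] assms(3,4) unfolding padded_def
      by (cases "i = 0 \<or> i = Suc (dimN n)") auto
  qed
  ultimately show ?thesis
    unfolding padded_bounded_def by metis
qed

text \<open>The sign pattern flips exactly after the positions \<open>0, \<dots>, L\<^sub>1 - 1\<close> and
  \<open>k + 1, \<dots>, k + L\<^sub>2\<close>.\<close>

definition two_block_pattern :: "nat \<Rightarrow> nat \<Rightarrow> nat \<Rightarrow> nat \<Rightarrow> real" where
  "two_block_pattern k L\<^sub>1 L\<^sub>2 i = - ((-1) ^ (min i L\<^sub>1 + min (i - Suc k) L\<^sub>2))"

lemma two_block_pattern_sign: "two_block_pattern k L\<^sub>1 L\<^sub>2 i \<in> {1, -1}"
  unfolding two_block_pattern_def by (auto simp: minus_one_power_iff)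

lemma two_block_pattern:
  assumes k: "1 \<le> k" and L: "L\<^sub>1 \<le> k - 1" "k + L\<^sub>2 \<le> N"
  shows "two_block_pattern k L\<^sub>1 L\<^sub>2 0 = -1"
    "two_block_pattern k L\<^sub>1 L\<^sub>2 (Suc N) = - ((-1) ^ (L\<^sub>1 + L\<^sub>2))"
    "two_block_pattern k L\<^sub>1 L\<^sub>2 (k - 1) = - ((-1) ^ L\<^sub>1)"
    "two_block_pattern k L\<^sub>1 L\<^sub>2 k = - ((-1) ^ L\<^sub>1)"
    "two_block_pattern k L\<^sub>1 L\<^sub>2 (Suc k) = - ((-1) ^ L\<^sub>1)"
    "sign_changes_on (two_block_pattern k L\<^sub>1 L\<^sub>2) 0 (Suc N) = L\<^sub>1 + L\<^sub>2"
proof -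
  let ?t = "two_block_pattern k L\<^sub>1 L\<^sub>2"
  have "min (Suc N) L\<^sub>1 = L\<^sub>1" "min (Suc N - Suc k) L\<^sub>2 = L\<^sub>2"
    "min (k - 1) L\<^sub>1 = L\<^sub>1" "min k L\<^sub>1 = L\<^sub>1" "min (Suc k) L\<^sub>1 = L\<^sub>1"
    using k L by auto
  then show "?t 0 = -1" "?t (Suc N) = - ((-1) ^ (L\<^sub>1 + L\<^sub>2))"
    "?t (k - 1) = - ((-1) ^ L\<^sub>1)" "?t k = - ((-1) ^ L\<^sub>1)" "?t (Suc k) = - ((-1) ^ L\<^sub>1)"
    unfolding two_block_pattern_def by simp_all
  have step: "?t (Suc i) = (if i < L\<^sub>1 \<or> (Suc k \<le> i \<and> i < Suc k + L\<^sub>2) then - ?t i else ?t i)" for i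
  proof -
    have e: "min (Suc i) L\<^sub>1 + min (Suc i - Suc k) L\<^sub>2
        = min i L\<^sub>1 + min (i - Suc k) L\<^sub>2 + of_bool (i < L\<^sub>1 \<or> (Suc k \<le> i \<and> i < Suc k + L\<^sub>2))"
      using k L by (cases "Suc k \<le> i") (auto simp: Suc_diff_le)
    show ?thesis
      unfolding two_block_pattern_def e unfolding power_add
      by (cases "i < L\<^sub>1 \<or> (Suc k \<le> i \<and> i < Suc k + L\<^sub>2)") simp_all
  qed
  have "?t i \<noteq> - ?t i" for i
    unfolding two_block_pattern_def by simp
  then have "{i\<in>{0..<Suc N}. ?t i \<noteq> ?t (Suc i)} = {0..<L\<^sub>1} \<union> {Suc k..<Suc k + L\<^sub>2}"
    using step L k by auto
  moreover have "{0..<L\<^sub>1} \<inter> {Suc k..<Suc k + L\<^sub>2} = {}" using L k by auto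
  ultimately show "sign_changes_on ?t 0 (Suc N) = L\<^sub>1 + L\<^sub>2"
    unfolding sign_changes_on_def by (simp add: card_Un_disjoint)
qed

lemma exists_split_with_parity:
  assumes n: "n \<ge> 1" and k: "1 \<le> k" "k \<le> dimN n" and d: "d \<in> {1, -1::real}"
    and k1: "k = 1 \<Longrightarrow> d = -1" and kN: "k = dimN n \<Longrightarrow> d = 1"
  shows "\<exists>L. L \<le> k - 1 \<and> L \<le> 2 * n - 1 \<and> k + (2 * n - 1 - L) \<le> dimN n \<and> - ((-1) ^ L) = d"
proof (cases "- ((-1::real) ^ (k - 2 * n)) = d")
  case True
  then show ?thesis
    using n k by (intro exI[of _ "k - 2 * n"]) (auto simp: dimN_def)
next
  case False
  have "k \<noteq> 1" using False k1 n by auto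
  moreover have "k \<noteq> dimN n"
  proof
    assume "k = dimN n"
    then have "k - 2 * n = 2 * n - 1" using n by (simp add: dimN_def)
    then show False using False kN \<open>k = dimN n\<close> n by simp
  qed
  moreover have "- ((-1::real) ^ (k - 2 * n + 1)) = d"
    using False d by (auto simp: minus_one_power_iff)
  ultimately show ?thesis
    using n k by (intro exI[of _ "k - 2 * n + 1"]) (auto simp: dimN_def)
qed

lemma exists_coords_flipped_by_add:
  assumes t: "\<And>i. t i \<in> {1, -1}" and k: "t k = - sgn (a k)" "a k \<noteq> 0"
  shows "\<exists>c\<in>Rvec n. \<forall>i. 1 \<le> i \<longrightarrow> i \<le> dimN n \<longrightarrow>
           sgn (c i) = t i \<and> sgn (c i + a i) = (t(k := - t k)) i"
proof
  define c where "c = (\<lambda>i. if 1 \<le> i \<and> i \<le> dimN n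
    then (if i = k then t i * (\<bar>a k\<bar> / 2) else t i * (\<bar>a i\<bar> + 1)) else 0)"
  show "c \<in> Rvec n" unfolding c_def Rvec_def by auto
  show "\<forall>i. 1 \<le> i \<longrightarrow> i \<le> dimN n \<longrightarrow> sgn (c i) = t i \<and> sgn (c i + a i) = (t(k := - t k)) i"
  proof (intro allI impI conjI)
    fix i assume i: "1 \<le> i" "i \<le> dimN n"
    show "sgn (c i) = t i"
      using i k(2) t[of i] unfolding c_def by (auto simp: sgn_mult)
    show "sgn (c i + a i) = (t(k := - t k)) i"
    proof (cases "i = k")
      case True
      then have "c i + a i = a k / 2"
        using i k(1) unfolding c_def by (simp add: sgn_mult_abs)
      then show ?thesis using True k(1) by (simp add: sgn_if)
    next
      case False
      then have "c i = t i * (\<bar>a i\<bar> + 1)" using i unfolding c_def by simp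
      then show ?thesis using False t[of i] by (auto simp: sgn_if)
    qed
  qed
qed

lemma exists_padded_bounded_not_add:
  assumes n: "n \<ge> 1" and k: "1 \<le> k" "k \<le> dimN n" and ak: "a k \<noteq> 0"
    and k1: "k = 1 \<Longrightarrow> a 1 > 0" and kN: "k = dimN n \<Longrightarrow> a (dimN n) < 0"
  shows "\<exists>c\<in>Rvec n. (\<exists>i\<in>{1..dimN n}. c i \<noteq> 0) \<and> padded_bounded n c \<and>
           \<not> padded_bounded n (\<lambda>i. c i + a i)"
proof -
  let ?N = "dimN n"
  define d where "d = - sgn (a k)"
  have d: "d \<in> {1, -1}" using ak unfolding d_def by (auto simp: sgn_if)
  obtain L\<^sub>1 where L\<^sub>1: "L\<^sub>1 \<le> k - 1" "L\<^sub>1 \<le> 2 * n - 1" "k + (2 * n - 1 - L\<^sub>1) \<le> ?N"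
      "- ((-1) ^ L\<^sub>1) = d"
    using exists_split_with_parity[OF n k d] k1 kN unfolding d_def by auto
  define t where "t = two_block_pattern k L\<^sub>1 (2 * n - 1 - L\<^sub>1)"
  note pattern = two_block_pattern[OF k(1) L\<^sub>1(1,3), folded t_def]
  have t_sign: "t i \<in> {1, -1}" for i
    unfolding t_def by (rule two_block_pattern_sign)
  have t_nonzero: "t i \<noteq> 0" for i
    using t_sign[of i] by auto
  have flipped_nonzero: "(t(k := - t k)) i \<noteq> 0" for i
    using t_nonzero[of i] t_nonzero[of k] by simp
  have t: "t 0 = -1" "t (Suc ?N) = 1" "sign_changes_on t 0 (Suc ?N) = 2 * n - 1"
    using pattern(1,2,6) L\<^sub>1(2) n by simp_all
  have tk: "t (k - 1) = d" "t k = d" "t (Suc k) = d"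
    using pattern(3-5) L\<^sub>1(4) by simp_all
  obtain c where c: "c \<in> Rvec n"
    and sgns: "\<forall>i. 1 \<le> i \<longrightarrow> i \<le> ?N \<longrightarrow> sgn (c i) = t i \<and> sgn (c i + a i) = (t(k := - t k)) i"
    using exists_coords_flipped_by_add[of t k a n] t_sign tk(2) ak unfolding d_def by blast
  have sgn_c: "sgn (c i) = t i" and sgn_ca: "sgn (c i + a i) = (t(k := - t k)) i"
    if "1 \<le> i" "i \<le> ?N" for i
    using sgns that by simp_all
  have "padded_bounded n c \<longleftrightarrow> sign_changes_on t 0 (Suc ?N) \<le> 2 * n - 1"
    using sgn_c t t_nonzero by (intro padded_bounded_iff_sign_pattern) auto
  then have bounded: "padded_bounded n c" using t(3) by simp
  have "padded_bounded n (\<lambda>i. c i + a i)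
      \<longleftrightarrow> sign_changes_on (t(k := - t k)) 0 (Suc ?N) \<le> 2 * n - 1"
    using sgn_ca t flipped_nonzero k by (intro padded_bounded_iff_sign_pattern) auto
  moreover have "sign_changes_on (t(k := - t k)) 0 (Suc ?N) + 2 = sign_changes_on t 0 (Suc ?N) + 4"
    using sign_changes_on_flip[of 0 k "Suc ?N" t] k tk d by simp
  ultimately have unbounded: "\<not> padded_bounded n (\<lambda>i. c i + a i)"
    using t(3) n by simp
  have "c k \<noteq> 0" using sgn_c[OF k] t_nonzero[of k] by auto
  then have "(\<exists>i\<in>{1..?N}. c i \<noteq> 0) \<and> padded_bounded n c \<and> \<not> padded_bounded n (\<lambda>i. c i + a i)"
    using k bounded unbounded by auto
  then show ?thesis using c by (rule bexI[where x = c])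
qed

definition lincomb :: "nat \<Rightarrow> (nat \<Rightarrow> nat \<Rightarrow> real) \<Rightarrow> (nat \<Rightarrow> real) \<Rightarrow> nat \<Rightarrow> real" where
  "lincomb n E c = (\<lambda>k. \<Sum>i=1..dimN n. c i * E i k)"

lemma lincomb_add: "lincomb n E (\<lambda>i. c i + d i) = (\<lambda>k. lincomb n E c k + lincomb n E d k)"
  unfolding lincomb_def by (simp add: sum.distrib distrib_right)

lemma lincomb_in_Rvec: "is_J_basis n E \<Longrightarrow> lincomb n E c \<in> Rvec n"
  unfolding Rvec_def lincomb_def is_J_basis_def by auto

lemma lincomb_stem_coords:
  assumes "n \<ge> 1"
  shows "lincomb n E (stem_coords n \<alpha> \<beta>) = (\<lambda>k. - \<alpha> * E 1 k + \<beta> * E (dimN n) k)"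
proof
  fix k
  have N: "dimN n \<ge> 3" using dimN_ge_3[OF assms] .
  have "lincomb n E (stem_coords n \<alpha> \<beta>) k
      = (\<Sum>i=1..dimN n. (if i = 1 then - \<alpha> * E 1 k else 0) + (if i = dimN n then \<beta> * E (dimN n) k else 0))"
    unfolding lincomb_def by (rule sum.cong) (use N in \<open>auto simp: stem_coords_def\<close>)
  also have "\<dots> = - \<alpha> * E 1 k + \<beta> * E (dimN n) k"
    using N by (simp add: sum.distrib)
  finally show "lincomb n E (stem_coords n \<alpha> \<beta>) k = - \<alpha> * E 1 k + \<beta> * E (dimN n) k" .
qed

lemma Jform_lincomb: "Jform n v (lincomb n E c) = (\<Sum>l=1..dimN n. c l * Jform n v (E l))"
proof -
  have "Jform n v (lincomb n E c) = (\<Sum>i=1..dimN n. \<Sum>l=1..dimN n. c l * ((-1) ^ i * v i * E l (4 * n - i)))"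
    unfolding Jform_def lincomb_def by (simp add: sum_distrib_left mult_ac)
  also have "\<dots> = (\<Sum>l=1..dimN n. c l * Jform n v (E l))"
    unfolding Jform_def by (subst sum.swap) (simp add: sum_distrib_left)
  finally show ?thesis .
qed

lemma Jform_basis_lincomb:
  assumes "is_J_basis n E" "1 \<le> j" "j \<le> dimN n"
  shows "Jform n (E j) (lincomb n E c) = (-1) ^ j * c (4 * n - j)"
proof -
  have "Jform n (E j) (lincomb n E c) = (\<Sum>l=1..dimN n. c l * Jmat n j l)"
    unfolding Jform_lincomb using assms unfolding is_J_basis_def by (intro sum.cong) auto
  also have "\<dots> = (\<Sum>l=1..dimN n. if l = 4 * n - j then c l * (-1) ^ j else 0)"
    unfolding Jmat_def by (intro sum.cong) auto
  also have "\<dots> = (-1) ^ j * c (4 * n - j)"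
    using assms(2,3) unfolding dimN_def by (subst sum.delta) auto
  finally show ?thesis .
qed

text \<open>The coefficient at \<open>l\<close> is recovered by pairing with the partner \<open>E (4n - l)\<close>.\<close>

lemma lincomb_coeff_eq:
  assumes "is_J_basis n E" "lincomb n E c = lincomb n E c'" "1 \<le> l" "l \<le> dimN n"
  shows "c l = c' l"
proof -
  have j: "1 \<le> 4 * n - l" "4 * n - l \<le> dimN n" "4 * n - (4 * n - l) = l"
    using assms(3,4) unfolding dimN_def by auto
  show ?thesis
    using Jform_basis_lincomb[OF assms(1) j(1,2), of c] Jform_basis_lincomb[OF assms(1) j(1,2), of c']
      assms(2) j(3) by simp
qed

lemma J_basis_inj_on:
  assumes "is_J_basis n E"
  shows "inj_on E {1..dimN n}"
proof
  fix i j assume i: "i \<in> {1..dimN n}" and j: "j \<in> {1..dimN n}" and "E i = E j"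
  then have "Jform n (E (4 * n - i)) (E i) = Jform n (E (4 * n - i)) (E j)" by simp
  moreover have "4 * n - i \<in> {1..dimN n}" "4 * n - (4 * n - i) = i"
    using i unfolding dimN_def by auto
  ultimately have "Jmat n (4 * n - i) i = Jmat n (4 * n - i) j"
    using assms i j unfolding is_J_basis_def by metis
  then show "i = j"
    using \<open>4 * n - (4 * n - i) = i\<close> unfolding Jmat_def by (auto split: if_splits)
qed

lemma sum_fun_apply: "(\<Sum>i\<in>A. f i) x = (\<Sum>i\<in>A. f i x)"
  by (induction A rule: infinite_finite_induct) auto

interpretation pointwise: vector_space "\<lambda>(r::real) (f::nat \<Rightarrow> real) k. r * f k"
  by unfold_locales (auto simp: fun_eq_iff algebra_simps)

lemma lincomb_eq_sum: "inj_on E {1..dimN n} \<Longrightarrow>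
    (\<Sum>v\<in>E ` {1..dimN n}. (\<lambda>k. u v * v k)) = lincomb n E (\<lambda>i. u (E i))"
  unfolding lincomb_def by (simp add: sum.reindex fun_eq_iff sum_fun_apply)

lemma J_basis_independent:
  assumes "is_J_basis n E"
  shows "pointwise.independent (E ` {1..dimN n})"
proof
  assume "pointwise.dependent (E ` {1..dimN n})"
  then obtain u v where "v \<in> E ` {1..dimN n}" "u v \<noteq> 0"
    and "(\<Sum>v\<in>E ` {1..dimN n}. (\<lambda>k. u v * v k)) = 0"
    using pointwise.dependent_finite by auto
  moreover have "lincomb n E (\<lambda>_. 0) = 0" unfolding lincomb_def by (simp add: fun_eq_iff)
  ultimately show False
    using lincomb_eq_sum[OF J_basis_inj_on[OF assms]] lincomb_coeff_eq[OF assms, of "\<lambda>i. u (E i)" "\<lambda>_. 0"]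
    by auto
qed

lemma Rvec_subset_span_units:
  "Rvec n \<subseteq> pointwise.span ((\<lambda>i k. of_bool (k = i)) ` {1..dimN n})"
proof
  fix v assume v: "v \<in> Rvec n"
  have "v = (\<Sum>i\<in>{1..dimN n}. (\<lambda>k. v i * of_bool (k = i)))"
  proof
    fix x
    have "(\<Sum>i\<in>{1..dimN n}. (\<lambda>k. v i * of_bool (k = i))) x = (\<Sum>i\<in>{1..dimN n}. if i = x then v x else 0)"
      unfolding sum_fun_apply by (intro sum.cong) auto
    also have "\<dots> = v x"
      using v unfolding Rvec_def by (cases "x \<in> {1..dimN n}") (auto simp: not_le less_Suc_eq_le)
    finally show "v x = (\<Sum>i\<in>{1..dimN n}. (\<lambda>k. v i * of_bool (k = i))) x" ..
  qed
  also have "\<dots> \<in> pointwise.span ((\<lambda>i k. of_bool (k = i)) ` {1..dimN n})"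
    by (intro pointwise.span_sum pointwise.span_scale pointwise.span_base) auto
  finally show "v \<in> pointwise.span ((\<lambda>i k. of_bool (k = i)) ` {1..dimN n})" .
qed

text \<open>\<open>dimN n\<close> independent vectors in a space spanned by \<open>dimN n\<close> vectors span it.\<close>

lemma Rvec_subset_span_J_basis:
  assumes "is_J_basis n E"
  shows "Rvec n \<subseteq> pointwise.span (E ` {1..dimN n})"
proof
  let ?S = "E ` {1..dimN n}" and ?T = "(\<lambda>i k. of_bool (k = i) :: real) ` {1..dimN n}"
  fix w assume "w \<in> Rvec n"
  show "w \<in> pointwise.span ?S"
  proof (rule ccontr)
    assume w: "w \<notin> pointwise.span ?S"
    have "pointwise.independent (insert w ?S)"
      using pointwise.independent_insertI[OF w J_basis_independent[OF assms]] .
    moreover have "insert w ?S \<subseteq> Rvec n"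
      using assms \<open>w \<in> Rvec n\<close> unfolding is_J_basis_def by auto
    then have "insert w ?S \<subseteq> pointwise.span ?T"
      using Rvec_subset_span_units by (rule order_trans)
    ultimately have "card (insert w ?S) \<le> card ?T"
      using pointwise.independent_span_bound[of ?T "insert w ?S"] by simp
    moreover have "w \<notin> ?S"
      using w pointwise.span_base by metis
    then have "card (insert w ?S) = Suc (dimN n)"
      using card_image[OF J_basis_inj_on[OF assms]] by simp
    moreover have "card ?T \<le> dimN n"
      using card_image_le[of "{1..dimN n}" "\<lambda>i k. of_bool (k = i) :: real"] by simp
    ultimately show False by simp
  qed
qed

lemma Rvec_eq_lincomb:
  assumes "is_J_basis n E" "w \<in> Rvec n"
  shows "\<exists>c\<in>Rvec n. w = lincomb n E c"
proof -
  have "w \<in> range (\<lambda>u. \<Sum>v\<in>E ` {1..dimN n}. (\<lambda>k. u v * v k))"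
    using Rvec_subset_span_J_basis[OF assms(1)] assms(2) pointwise.span_finite[of "E ` {1..dimN n}"]
    by auto
  then obtain u where "w = (\<Sum>v\<in>E ` {1..dimN n}. (\<lambda>k. u v * v k))" ..
  then have "w = lincomb n E (\<lambda>i. u (E i))"
    using lincomb_eq_sum[OF J_basis_inj_on[OF assms(1)]] by simp
  then have "w = lincomb n E (\<lambda>i. if 1 \<le> i \<and> i \<le> dimN n then u (E i) else 0)"
    unfolding lincomb_def by simp
  moreover have "(\<lambda>i. if 1 \<le> i \<and> i \<le> dimN n then u (E i) else 0) \<in> Rvec n"
    unfolding Rvec_def by auto
  ultimately show ?thesis ..
qed

lemma lincomb_eq_zero_iff:
  assumes "is_J_basis n E"
  shows "lincomb n E c = (\<lambda>_. 0) \<longleftrightarrow> (\<forall>i\<in>{1..dimN n}. c i = 0)"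
proof
  assume "lincomb n E c = (\<lambda>_. 0)"
  moreover have "lincomb n E (\<lambda>_. 0) = (\<lambda>_. 0)" unfolding lincomb_def by simp
  ultimately show "\<forall>i\<in>{1..dimN n}. c i = 0"
    using lincomb_coeff_eq[OF assms, of c "\<lambda>_. 0"] by simp
qed (simp add: lincomb_def)

lemma coords_lincomb:
  assumes "is_J_basis n E" "c \<in> Rvec n"
  shows "coords n E (lincomb n E c) = c"
  unfolding coords_def
proof (rule the_equality)
  show "(\<forall>i. (i < 1 \<or> i > dimN n) \<longrightarrow> c i = 0) \<and> lincomb n E c = (\<lambda>k. \<Sum>i=1..dimN n. c i * E i k)"
    using assms(2) unfolding Rvec_def lincomb_def by simp
  fix c' assume c': "(\<forall>i. (i < 1 \<or> i > dimN n) \<longrightarrow> c' i = 0) \<and> lincomb n E c = (\<lambda>k. \<Sum>i=1..dimN n. c' i * E i k)"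
  show "c' = c"
  proof
    fix i show "c' i = c i"
      using lincomb_coeff_eq[OF assms(1), of c c' i] c' assms(2) unfolding Rvec_def lincomb_def
      by (cases "1 \<le> i \<and> i \<le> dimN n") (auto simp: not_le less_Suc_eq_le)
  qed
qed

lemma lincomb_in_crooked_H_iff:
  assumes "n \<ge> 1" "is_J_basis n E" "c \<in> Rvec n"
  shows "lincomb n E c \<in> crooked_H n E \<longleftrightarrow> (\<exists>i\<in>{1..dimN n}. c i \<noteq> 0) \<and> padded_bounded n c"
proof -
  have "lincomb n E c \<in> crooked_H n E
      \<longleftrightarrow> lincomb n E c \<noteq> (\<lambda>_. 0) \<and> crooked_coords n (coords n E (lincomb n E c))"
    unfolding crooked_H_def crooked_coords_def Let_def using lincomb_in_Rvec[OF assms(2)] by simp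
  also have "\<dots> \<longleftrightarrow> (\<exists>i\<in>{1..dimN n}. c i \<noteq> 0) \<and> crooked_coords n c"
    unfolding coords_lincomb[OF assms(2,3)] lincomb_eq_zero_iff[OF assms(2)] by simp
  finally show ?thesis
    using padded_bounded_imp_crooked_coords[OF assms(1)] crooked_coords_imp_padded_bounded[OF assms(1)]
    by blast
qed

lemma stem_cone_subset_stem_quadrant:
  assumes n: "n \<ge> 1" and J: "is_J_basis n E" and "\<alpha> \<ge> 0" "\<beta> \<ge> 0"
  shows "(\<lambda>k. - \<alpha> * E 1 k + \<beta> * E (dimN n) k) \<in> stem_quadrant n E"
proof -
  let ?u = "lincomb n E (stem_coords n \<alpha> \<beta>)"
  have stem: "stem_coords n \<alpha> \<beta> \<in> Rvec n"
    using dimN_ge_3[OF n] unfolding Rvec_def stem_coords_def by auto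
  have "(\<lambda>k. ?u k + v k) \<in> crooked_H n E" if v: "v \<in> crooked_H n E" for v
  proof -
    obtain c where c: "c \<in> Rvec n" "v = lincomb n E c"
      using Rvec_eq_lincomb[OF J] v unfolding crooked_H_def by blast
    then have "(\<exists>i\<in>{1..dimN n}. c i \<noteq> 0) \<and> padded_bounded n c"
      using lincomb_in_crooked_H_iff[OF n J] v by blast
    then have bounded: "padded_bounded n c" by blast
    have "\<exists>i\<in>{1..dimN n}. c i + stem_coords n \<alpha> \<beta> i \<noteq> 0"
    proof (rule ccontr)
      assume "\<not> ?thesis"
      then have "c i = - stem_coords n \<alpha> \<beta> i" if "1 \<le> i" "i \<le> dimN n" for i
        using that by (auto simp: eq_neg_iff_add_eq_0)
      then show False
        using not_padded_bounded_neg_stem[OF n assms(3,4)] bounded by blast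
    qed
    moreover have "padded_bounded n (\<lambda>i. c i + stem_coords n \<alpha> \<beta> i)"
      using padded_bounded_add_stem[OF n assms(3,4) bounded] .
    moreover have "(\<lambda>i. c i + stem_coords n \<alpha> \<beta> i) \<in> Rvec n"
      using c(1) stem unfolding Rvec_def by simp
    ultimately have "lincomb n E (\<lambda>i. c i + stem_coords n \<alpha> \<beta> i) \<in> crooked_H n E"
      using lincomb_in_crooked_H_iff[OF n J] by blast
    then show ?thesis
      unfolding lincomb_add c(2) by (simp add: add.commute)
  qed
  then show ?thesis
    unfolding stem_quadrant_def lincomb_stem_coords[OF n, symmetric] using lincomb_in_Rvec[OF J] by blast
qed

lemma stem_quadrant_subset_stem_cone:
  assumes n: "n \<ge> 1" and J: "is_J_basis n E" and u: "u \<in> stem_quadrant n E"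
  shows "\<exists>\<alpha> \<beta>. \<alpha> \<ge> 0 \<and> \<beta> \<ge> 0 \<and> u = (\<lambda>k. - \<alpha> * E 1 k + \<beta> * E (dimN n) k)"
proof -
  let ?N = "dimN n"
  have N: "?N \<ge> 3" using dimN_ge_3[OF n] .
  obtain a where a: "a \<in> Rvec n" "u = lincomb n E a"
    using Rvec_eq_lincomb[OF J] u unfolding stem_quadrant_def by blast
  have excluded: False
    if k: "1 \<le> k" "k \<le> ?N" "a k \<noteq> 0" "k = 1 \<Longrightarrow> a 1 > 0" "k = ?N \<Longrightarrow> a ?N < 0" for k
  proof -
    obtain c where c: "c \<in> Rvec n" "\<exists>i\<in>{1..?N}. c i \<noteq> 0" "padded_bounded n c"
        "\<not> padded_bounded n (\<lambda>i. c i + a i)"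
      using exists_padded_bounded_not_add[OF n k] by blast
    have "lincomb n E c \<in> crooked_H n E"
      using lincomb_in_crooked_H_iff[OF n J c(1)] c(2,3) by blast
    then have "(\<lambda>k. u k + lincomb n E c k) \<in> crooked_H n E"
      using u unfolding stem_quadrant_def by blast
    moreover have "(\<lambda>k. u k + lincomb n E c k) = lincomb n E (\<lambda>i. c i + a i)"
      unfolding a(2) lincomb_add by (simp add: add.commute)
    ultimately have "lincomb n E (\<lambda>i. c i + a i) \<in> crooked_H n E" by simp
    moreover have "(\<lambda>i. c i + a i) \<in> Rvec n"
      using a(1) c(1) unfolding Rvec_def by simp
    ultimately show False
      using lincomb_in_crooked_H_iff[OF n J] c(4) by blast
  qed
  define \<alpha> \<beta> where "\<alpha> = - a 1" and "\<beta> = a ?N"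
  have "a = stem_coords n \<alpha> \<beta>"
  proof
    fix i
    consider "i = 1" | "i = ?N" | "1 < i" "i < ?N" | "i < 1 \<or> i > ?N" by fastforce
    then show "a i = stem_coords n \<alpha> \<beta> i"
      by cases (use N a(1) excluded[of i] in \<open>auto simp: stem_coords_def Rvec_def \<alpha>_def \<beta>_def\<close>)
  qed
  then have "u = (\<lambda>k. - \<alpha> * E 1 k + \<beta> * E ?N k)"
    using a(2) lincomb_stem_coords[OF n] by simp
  moreover have "\<alpha> \<ge> 0" "\<beta> \<ge> 0"
    using excluded[of 1] excluded[of ?N] N unfolding \<alpha>_def \<beta>_def by force+
  ultimately show ?thesis by blast
qed

theorem proposition5p5:
  fixes n :: nat and E :: "nat \<Rightarrow> nat \<Rightarrow> real"
  assumes "n \<ge> 1"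
    and "is_J_basis n E"
    and "pos_oriented n E"
  shows "stem_quadrant n E =
    {u. \<exists>\<alpha> \<beta>. \<alpha> \<ge> 0 \<and> \<beta> \<ge> 0 \<and> u = (\<lambda>k. - \<alpha> * E 1 k + \<beta> * E (dimN n) k)}"
  using stem_quadrant_subset_stem_cone[OF assms(1,2)] stem_cone_subset_stem_quadrant[OF assms(1,2)]
  by blast

end
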